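(* Let $Q$ be a connected quiver of rank $3$ with at least one frozen vertex whose mutable part is mutation-abundant, and let $\mathbf M$ be an infinite reduced weakly balanced mutation sequence. Then there is $i$ such that $Q^{(j)}_{\mathbf M}$ is sign-coherent for all $j>i$.
   Context: A quiver is a finite directed multigraph with no loops and no oriented 2-cycles, whose vertex set is partitioned into mutable and frozen vertices; arrows between two frozen vertices are ignored. Mutation $\mu_j$ at mutable $j$: for each path $i\to j\to k$ with $a$ arrows $i\to j$ and $b$ arrows $j\to k$ add $ab$ arrows $i\to k$, reverse all arrows at $j$, cancel 2-cycles. A mutation sequence $\mathbf M=m_1m_2\cdots$ has $Q^{(0)}_{\mathbf M}=Q$, $Q^{(i)}_{\mathbf M}=\mu_{m_i}(Q^{(i-1)}_{\mathbf M})$; reduced means $m_i\ne m_{i+1}$, weakly balanced means every mutable vertex occurs infinitely often. Connected: the mutable part is connected as an undirected graph and every frozen vertex is adjacent to some mutable vertex. A quiver without frozen vertices is mutation-abundant if every quiver mutation-equivalent to it has at least 2 arrows between every pair of vertices. A mutable vertex adjacent to at least one frozen vertex is red (resp. green) if all arrows between it and frozen vertices point towards (resp. away from) it; a quiver is sign-coherent if every mutable vertex is red or green. *)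

theory Defs
  imports Main
begin

text \<open>A quiver with vertex type 'v is encoded by a set M of mutable vertices,
a set F of frozen vertices and its (skew-symmetric) exchange matrix B, where
B i k = (number of arrows i -> k) - (number of arrows k -> i).  Since quivers
have no loops and no oriented 2-cycles, B determines the quiver.\<close>

definition quiver :: "'v set \<Rightarrow> 'v set \<Rightarrow> ('v \<Rightarrow> 'v \<Rightarrow> int) \<Rightarrow> bool" where
  "quiver M F B \<longleftrightarrow> finite M \<and> finite F \<and> M \<inter> F = {} \<and>
     (\<forall>i k. B i k = - B k i) \<and>
     (\<forall>i k. B i k \<noteq> 0 \<longrightarrow> i \<in> M \<union> F \<and> k \<in> M \<union> F)"

text \<open>Quiver mutation at j: add a*b arrows i -> k for every path i -> j -> k,
reverse the arrows at j, cancel 2-cycles.\<close>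
definition mut :: "'v \<Rightarrow> ('v \<Rightarrow> 'v \<Rightarrow> int) \<Rightarrow> ('v \<Rightarrow> 'v \<Rightarrow> int)" where
  "mut j B = (\<lambda>i k. if i = j \<or> k = j then - B i k
      else B i k + max (B i j) 0 * max (B j k) 0 - max (B k j) 0 * max (B j i) 0)"

fun mutseq :: "(nat \<Rightarrow> 'v) \<Rightarrow> ('v \<Rightarrow> 'v \<Rightarrow> int) \<Rightarrow> nat \<Rightarrow> ('v \<Rightarrow> 'v \<Rightarrow> int)" where
  "mutseq m B 0 = B"
| "mutseq m B (Suc i) = mut (m i) (mutseq m B i)"

definition reduced_seq :: "(nat \<Rightarrow> 'v) \<Rightarrow> bool" where
  "reduced_seq m \<longleftrightarrow> (\<forall>i. m i \<noteq> m (Suc i))"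

definition weakly_balanced :: "'v set \<Rightarrow> (nat \<Rightarrow> 'v) \<Rightarrow> bool" where
  "weakly_balanced M m \<longleftrightarrow> (\<forall>v\<in>M. infinite {i. m i = v})"

definition connected_quiver :: "'v set \<Rightarrow> 'v set \<Rightarrow> ('v \<Rightarrow> 'v \<Rightarrow> int) \<Rightarrow> bool" where
  "connected_quiver M F B \<longleftrightarrow>
     (\<forall>i\<in>M. \<forall>k\<in>M. (\<lambda>x y. x \<in> M \<and> y \<in> M \<and> B x y \<noteq> 0)\<^sup>*\<^sup>* i k) \<and>
     (\<forall>f\<in>F. \<exists>i\<in>M. B f i \<noteq> 0)"

definition mutable_part :: "'v set \<Rightarrow> ('v \<Rightarrow> 'v \<Rightarrow> int) \<Rightarrow> ('v \<Rightarrow> 'v \<Rightarrow> int)" where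
  "mutable_part M B = (\<lambda>i k. if i \<in> M \<and> k \<in> M then B i k else 0)"

definition mutation_abundant :: "'v set \<Rightarrow> ('v \<Rightarrow> 'v \<Rightarrow> int) \<Rightarrow> bool" where
  "mutation_abundant V B \<longleftrightarrow>
     (\<forall>ms. set ms \<subseteq> V \<longrightarrow>
        (\<forall>i\<in>V. \<forall>k\<in>V. i \<noteq> k \<longrightarrow> \<bar>foldl (\<lambda>C j. mut j C) B ms i k\<bar> \<ge> 2))"

definition adj_frozen :: "'v set \<Rightarrow> ('v \<Rightarrow> 'v \<Rightarrow> int) \<Rightarrow> 'v \<Rightarrow> bool" where
  "adj_frozen F B v \<longleftrightarrow> (\<exists>f\<in>F. B f v \<noteq> 0)"

definition red :: "'v set \<Rightarrow> ('v \<Rightarrow> 'v \<Rightarrow> int) \<Rightarrow> 'v \<Rightarrow> bool" where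
  "red F B v \<longleftrightarrow> adj_frozen F B v \<and> (\<forall>f\<in>F. B f v \<ge> 0)"

definition green :: "'v set \<Rightarrow> ('v \<Rightarrow> 'v \<Rightarrow> int) \<Rightarrow> 'v \<Rightarrow> bool" where
  "green F B v \<longleftrightarrow> adj_frozen F B v \<and> (\<forall>f\<in>F. B f v \<le> 0)"

definition sign_coherent :: "'v set \<Rightarrow> 'v set \<Rightarrow> ('v \<Rightarrow> 'v \<Rightarrow> int) \<Rightarrow> bool" where
  "sign_coherent M F B \<longleftrightarrow> (\<forall>v\<in>M. adj_frozen F B v \<longrightarrow> red F B v \<or> green F B v)"

end

theory Submission
  imports Defs
begin

text \<open>Along the mutation sequence all weights between mutable vertices stay at least 2.
  Such a rank 3 quiver is eventually always cyclic or eventually always acyclic: a mutation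
  turning an acyclic quiver into a cyclic one leaves the mutated vertex opposite the heaviest
  arrow of the triangle, and this persists under all later mutations. In the cyclic regime the
  next mutation is at one of the two other vertices of the triangle; in the acyclic regime every
  mutated vertex is a source (or every one a sink), which makes the sequence 3-periodic.
  In both regimes the arrows between a frozen vertex and the three mutable vertices obey a
  piecewise linear recurrence with coefficients at least 2, and an integer potential decreases
  until the triple enters a sign-coherent region, which is invariant. In the cyclic regime the
  triple may first reach an invariant cone, which is left towards the coherent region by a
  mutation that weak balancedness guarantees. Since there are finitely many frozen vertices,
  eventually all of them are in their coherent regions, and then every mutable vertex is red
  or green.\<close>

section \<open>Mutation of skew-symmetric matrices\<close>

lemma mut_row_eq [simp]: "mut j C j k = - C j k"
  by (simp add: mut_def)

lemma mut_col_eq [simp]: "mut j C i j = - C i j"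
  by (simp add: mut_def)

lemma mut_neq_out:
  assumes skew: "\<And>i k. C i k = - C k i" and "i \<noteq> j" "k \<noteq> j" "0 < C j k"
  shows "mut j C i k = C i k + C j k * max (C i j) 0"
  using assms(2-4) skew[of k j] by (simp add: mut_def)

lemma mut_neq_in:
  assumes skew: "\<And>i k. C i k = - C k i" and "i \<noteq> j" "k \<noteq> j" "0 < C k j"
  shows "mut j C i k = C i k - C k j * max (C j i) 0"
  using assms(2-4) skew[of j k] by (simp add: mut_def)

lemma mut_neq_signed:
  assumes skew: "\<And>i k. C i k = - C k i" and "i \<noteq> j" "k \<noteq> j" "s = 1 \<or> s = -1" "0 < s * C j k"
  shows "s * mut j C i k = s * C i k + s * C j k * max (s * C i j) 0"
  using assms(4)
proof
  assume "s = 1"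
  then show ?thesis using mut_neq_out[OF skew assms(2,3)] assms(5) by simp
next
  assume "s = -1"
  then show ?thesis using mut_neq_in[OF skew assms(2,3)] assms(5) skew[of j k] skew[of i j] by simp
qed

lemma skew_mut:
  assumes "\<And>i k. C i k = - C k i"
  shows "mut j C i k = - mut j C k i"
  using assms[of i k] assms[of i j] assms[of j k] by (auto simp: mut_def)

lemma skew_mutseq:
  assumes "\<And>i k. B i k = - B k i"
  shows "mutseq m B n i k = - mutseq m B n k i"
proof (induction n arbitrary: i k)
  case 0
  show ?case unfolding mutseq.simps by (rule assms)
next
  case (Suc n)
  show ?case unfolding mutseq.simps by (rule skew_mut) (rule Suc.IH)
qed

lemma mutable_part_mut: "j \<in> M \<Longrightarrow> mutable_part M (mut j C) = mut j (mutable_part M C)"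
  by (intro ext) (auto simp: mutable_part_def mut_def)

lemma mutable_part_mutseq:
  assumes "\<And>n. m n \<in> M"
  shows "mutable_part M (mutseq m B n) = foldl (\<lambda>C j. mut j C) (mutable_part M B) (map m [0..<n])"
  by (induction n) (simp_all add: mutable_part_mut assms)

lemma mutation_abundant_mutseq:
  assumes "mutation_abundant M (mutable_part M B)" "\<And>n. m n \<in> M"
    and "i \<in> M" "k \<in> M" "i \<noteq> k"
  shows "2 \<le> \<bar>mutseq m B n i k\<bar>"
proof -
  have "set (map m [0..<n]) \<subseteq> M"
    using assms(2) by auto
  then have ab: "2 \<le> \<bar>foldl (\<lambda>C j. mut j C) (mutable_part M B) (map m [0..<n]) i k\<bar>"
    using assms(1,3-5) unfolding mutation_abundant_def by blast
  have "mutseq m B n i k = mutable_part M (mutseq m B n) i k"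
    using assms(3,4) by (simp add: mutable_part_def)
  also have "\<dots> = foldl (\<lambda>C j. mut j C) (mutable_part M B) (map m [0..<n]) i k"
    by (simp add: mutable_part_mutseq assms(2))
  finally show ?thesis
    using ab by simp
qed

section \<open>Two piecewise linear recurrences\<close>

lemma potential_descent:
  fixes g :: "nat \<Rightarrow> int"
  assumes "\<And>n. N \<le> n \<Longrightarrow> \<not> P n \<Longrightarrow> P (Suc n) \<or> g (Suc n) < g n" and "\<And>n. 0 \<le> g n"
  shows "\<exists>n\<ge>N. P n"
proof (rule ccontr)
  assume never: "\<not> (\<exists>n\<ge>N. P n)"
  have "g (N + d) \<le> g N - int d" for d
  proof (induction d)
    case (Suc d)
    then show ?case using assms(1)[of "N + d"] never by fastforce
  qed simp
  from this[of "nat (g N) + 1"] show False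
    using assms(2)[of N] assms(2)[of "N + (nat (g N) + 1)"] by simp
qed

lemma eventually_invariant:
  assumes "P n0" "\<And>n. n0 \<le> n \<Longrightarrow> P n \<Longrightarrow> P (Suc n)"
  shows "\<forall>\<^sub>F n in sequentially. P n"
  unfolding eventually_sequentially
proof (intro exI allI impI)
  show "P n" if "n0 \<le> n" for n
    using that by (induction rule: dec_induct) (simp_all add: assms)
qed

text \<open>In an oriented triangle k \<rightarrow> u \<rightarrow> w \<rightarrow> k with c arrows k \<rightarrow> u, a arrows u \<rightarrow> w and
  b arrows w \<rightarrow> k, let x, y, z be the signed numbers of arrows from a frozen vertex to u, w, k.
  Mutation at u maps (x, y, z) to (z - c max(-x, 0), y + a max(x, 0), -x) and yields the
  triangle u \<rightarrow> k \<rightarrow> w \<rightarrow> u.\<close>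

definition cyc_coherent :: "int \<Rightarrow> int \<Rightarrow> int \<Rightarrow> bool" where
  "cyc_coherent x y z \<longleftrightarrow> x \<le> 0 \<and> 0 \<le> y \<and> - y \<le> z \<and> z \<le> - x"

definition cyc_cone_u :: "int \<Rightarrow> int \<Rightarrow> int \<Rightarrow> bool" where
  "cyc_cone_u c x z \<longleftrightarrow> x \<le> 0 \<and> 0 \<le> z \<and> z + c * x \<le> x"

definition cyc_cone_w :: "int \<Rightarrow> int \<Rightarrow> int \<Rightarrow> bool" where
  "cyc_cone_w b y z \<longleftrightarrow> 0 \<le> y \<and> y \<le> z + b * y \<and> z \<le> 0"

definition cyc_settled :: "int \<Rightarrow> int \<Rightarrow> int \<Rightarrow> int \<Rightarrow> int \<Rightarrow> bool" where
  "cyc_settled b c x y z \<longleftrightarrow> cyc_coherent x y z \<or> cyc_cone_u c x z \<or> cyc_cone_w b y z"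

definition cyc_potential :: "int \<Rightarrow> int \<Rightarrow> int \<Rightarrow> int" where
  "cyc_potential x y z = 2 * (\<bar>x\<bar> + \<bar>y\<bar> + \<bar>z\<bar>) + (if z = 0 then 0 else 1)"

lemma cyc_coherent_step_u:
  assumes "2 \<le> a" "2 \<le> c" "cyc_coherent x y z \<or> cyc_cone_w b y z"
  shows "cyc_coherent (z - c * max (- x) 0) (y + a * max x 0) (- x)"
proof (cases "x \<le> 0")
  case True
  have "c * x \<le> 2 * x" using mult_right_mono_neg[OF assms(2) True] by simp
  then show ?thesis
    using True assms(3) by (auto simp: cyc_coherent_def cyc_cone_w_def max_def; linarith)
next
  case False
  have "2 * x \<le> a * x" using mult_right_mono[OF assms(1)] False by simp
  then show ?thesis
    using False assms(3) by (auto simp: cyc_coherent_def cyc_cone_w_def max_def; linarith)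
qed

lemma cyc_cone_u_step_u:
  assumes "2 \<le> c" "cyc_cone_u c x z"
  shows "cyc_cone_u c (z - c * max (- x) 0) (- x)"
proof -
  have x: "x \<le> 0" "z + c * x \<le> x" using assms(2) by (auto simp: cyc_cone_u_def)
  then have "c * (z + c * x) \<le> 2 * (z + c * x)"
    using mult_right_mono_neg[OF assms(1), of "z + c * x"] by simp
  then show ?thesis using x assms(2) by (auto simp: cyc_cone_u_def max_def algebra_simps)
qed

lemma cyc_settled_step_u:
  assumes "2 \<le> a" "2 \<le> c"
  shows "cyc_settled a c (z - c * max (- x) 0) (y + a * max x 0) (- x) \<or>
    cyc_potential (z - c * max (- x) 0) (y + a * max x 0) (- x) < cyc_potential x y z"
proof (cases "x \<le> 0")
  case x: True
  have cx: "c * x \<le> 2 * x" using mult_right_mono_neg[OF assms(2) x] by simp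
  have step: "z - c * max (- x) 0 = z + c * x" "y + a * max x 0 = y" using x by auto
  show ?thesis
  proof (cases "z + c * x \<le> x")
    case True
    then have "c * (z + c * x) \<le> 2 * (z + c * x)"
      using mult_right_mono_neg[OF assms(2), of "z + c * x"] x by simp
    then have "cyc_cone_u c (z + c * x) (- x)"
      using True x by (simp add: cyc_cone_u_def algebra_simps)
    then show ?thesis unfolding step by (simp add: cyc_settled_def)
  next
    case False
    then have "\<bar>z + c * x\<bar> + \<bar>x\<bar> < \<bar>z\<bar> + \<bar>x\<bar> \<or> x = 0" "z \<noteq> 0"
      using x cx by linarith+
    then show ?thesis unfolding step cyc_potential_def by auto
  qed
next
  case x: False
  have ax: "2 * x \<le> a * x" using mult_right_mono[OF assms(1)] x by simp
  have step: "z - c * max (- x) 0 = z" "y + a * max x 0 = y + a * x" using x by auto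
  show ?thesis
  proof (cases "x \<le> y + a * x")
    case True
    then have "2 * (y + a * x) \<le> a * (y + a * x)"
      using mult_right_mono[OF assms(1), of "y + a * x"] x by simp
    then have "cyc_cone_w a (y + a * x) (- x)"
      using True x by (simp add: cyc_cone_w_def algebra_simps)
    then show ?thesis unfolding step by (simp add: cyc_settled_def)
  next
    case False
    then have "\<bar>y + a * x\<bar> < \<bar>y\<bar>"
      using x ax by linarith
    then show ?thesis unfolding step cyc_potential_def using x by auto
  qed
qed

text \<open>Reversing all arrows exchanges u and w and maps (x, y, z) to (-y, -x, -z);
  this turns the mutation at u into the mutation at w.\<close>

lemma cyc_reverse:
  "cyc_coherent (- y) (- x) (- z) \<longleftrightarrow> cyc_coherent x y z"
  "cyc_cone_u c (- y) (- z) \<longleftrightarrow> cyc_cone_w c y z"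
  "cyc_cone_w b (- x) (- z) \<longleftrightarrow> cyc_cone_u b x z"
  "cyc_settled b c (- y) (- x) (- z) \<longleftrightarrow> cyc_settled c b x y z"
  "cyc_potential (- y) (- x) (- z) = cyc_potential x y z"
  by (auto simp: cyc_coherent_def cyc_cone_u_def cyc_cone_w_def cyc_settled_def cyc_potential_def)

lemma reverse_step_u:
  "- z - b * max (- (- y)) 0 = - (z + b * max y 0)"
  "- x + a * max (- y) 0 = - (x - a * max (- y) (0::int))"
  by simp_all

lemma cyc_coherent_step_w:
  assumes "2 \<le> a" "2 \<le> b" "cyc_coherent x y z \<or> cyc_cone_u c x z"
  shows "cyc_coherent (x - a * max (- y) 0) (z + b * max y 0) (- y)"
  using cyc_coherent_step_u[of a b "- y" "- x" "- z" c] assms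
  unfolding reverse_step_u cyc_reverse by blast

lemma cyc_cone_w_step_w:
  assumes "2 \<le> b" "cyc_cone_w b y z"
  shows "cyc_cone_w b (z + b * max y 0) (- y)"
  using cyc_cone_u_step_u[of b "- y" "- z"] assms
  unfolding reverse_step_u cyc_reverse by blast

lemma cyc_settled_step_w:
  assumes "2 \<le> a" "2 \<le> b"
  shows "cyc_settled b a (x - a * max (- y) 0) (z + b * max y 0) (- y) \<or>
    cyc_potential (x - a * max (- y) 0) (z + b * max y 0) (- y) < cyc_potential x y z"
  using cyc_settled_step_u[where c = b and x = "- y" and y = "- x" and z = "- z"] assms
  unfolding reverse_step_u cyc_reverse by blast

text \<open>In the acyclic regime x, y, z are the arrows from a frozen vertex to the next, the
  next but one and the last mutated vertex, multiplied by the sign of the sources.\<close>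

definition acyc_coherent :: "int \<Rightarrow> int \<Rightarrow> int \<Rightarrow> bool" where
  "acyc_coherent x y z \<longleftrightarrow> 0 \<le> x \<and> 0 \<le> y \<and> - x \<le> z \<and> z \<le> 0"

definition leading_zeros :: "int \<Rightarrow> int \<Rightarrow> int \<Rightarrow> int" where
  "leading_zeros x y z = (if x \<noteq> 0 then 0 else if y \<noteq> 0 then 1 else if z \<noteq> 0 then 2 else 3)"

text \<open>The leading zeros account for the steps with x = 0, which merely rotate the triple.\<close>

definition acyc_potential :: "int \<Rightarrow> int \<Rightarrow> int \<Rightarrow> int" where
  "acyc_potential x y z = 4 * (max (- x) 0 + max (- y) 0 + max (- z) 0) + leading_zeros x y z"

lemma acyc_coherent_step:
  assumes "1 \<le> p" "1 \<le> q" "acyc_coherent x y z"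
  shows "acyc_coherent (y + p * max x 0) (z + q * max x 0) (- x)"
proof -
  have "x \<le> p * x" "x \<le> q * x"
    using assms mult_right_mono[of 1 _ x] by (auto simp: acyc_coherent_def)
  then show ?thesis using assms(3) by (auto simp: acyc_coherent_def max_def)
qed

lemma leading_zeros_bounds: "0 \<le> leading_zeros x y z" "leading_zeros x y z \<le> 3"
  by (simp_all add: leading_zeros_def)

lemma acyc_potential_step:
  assumes "2 \<le> p" "2 \<le> q"
  shows "acyc_coherent (y + p * max x 0) (z + q * max x 0) (- x) \<or>
    acyc_potential (y + p * max x 0) (z + q * max x 0) (- x) < acyc_potential x y z"
proof (cases "0 < x")
  case x: True
  have px: "2 * x \<le> p * x" and qx: "2 * x \<le> q * x"
    using mult_right_mono[of 2 _ x] assms x by auto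
  show ?thesis
  proof (cases "x \<le> y + p * x \<and> 0 \<le> z + q * x")
    case True
    then show ?thesis using x by (simp add: acyc_coherent_def)
  next
    case False
    then have "max (- (y + p * x)) 0 + max (- (z + q * x)) 0 + max (- (- x)) 0 <
        max (- x) 0 + max (- y) 0 + max (- z) 0"
      using x px qx unfolding max_def by (auto split: if_split; linarith)
    then show ?thesis
      using x leading_zeros_bounds[of x y z] leading_zeros_bounds[of "y + p * x" "z + q * x" "- x"]
      by (simp add: acyc_potential_def)
  qed
next
  case False
  then show ?thesis
    using leading_zeros_bounds[of x y z] leading_zeros_bounds[of y z "- x"]
    by (cases "x = 0") (auto simp: acyc_coherent_def acyc_potential_def leading_zeros_def max_def)
qed

section \<open>Oriented triangles\<close>

lemma card3_eq_triple:
  assumes "card M = 3" "{a, b, c} \<subseteq> M" "a \<noteq> b" "b \<noteq> c" "a \<noteq> c"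
  shows "M = {a, b, c}"
proof -
  have "finite M" using assms(1) card.infinite by fastforce
  then show ?thesis using assms by (intro card_subset_eq[symmetric]) auto
qed

lemma card3_other_vertex:
  assumes "card M = 3"
  obtains c where "c \<in> M" "c \<noteq> a" "c \<noteq> b"
proof -
  have "card {a, b} \<le> 2"
    by (simp add: card_insert_if)
  then have "\<not> M \<subseteq> {a, b}"
    using assms card_mono[of "{a, b}" M] by auto
  then show ?thesis
    using that by blast
qed

definition oriented_triangle :: "'v set \<Rightarrow> ('v \<Rightarrow> 'v \<Rightarrow> int) \<Rightarrow> 'v \<Rightarrow> 'v \<Rightarrow> 'v \<Rightarrow> bool" where
  "oriented_triangle M C k u w \<longleftrightarrow> k \<in> M \<and> u \<in> M \<and> w \<in> M \<and> 0 < C k u \<and> 0 < C u w \<and> 0 < C w k"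

definition cyclic :: "'v set \<Rightarrow> ('v \<Rightarrow> 'v \<Rightarrow> int) \<Rightarrow> bool" where
  "cyclic M C \<longleftrightarrow> (\<exists>k u w. oriented_triangle M C k u w)"

definition opposite_heaviest :: "'v set \<Rightarrow> ('v \<Rightarrow> 'v \<Rightarrow> int) \<Rightarrow> 'v \<Rightarrow> bool" where
  "opposite_heaviest M C k \<longleftrightarrow>
     (\<exists>u w. oriented_triangle M C k u w \<and> C k u \<le> C u w \<and> C w k \<le> C u w)"

lemma opposite_heaviest_cyclic: "opposite_heaviest M C k \<Longrightarrow> cyclic M C"
  unfolding opposite_heaviest_def cyclic_def by blast

lemma oriented_triangle_distinct:
  assumes "\<And>i k. C i k = - C k i" "oriented_triangle M C k u w"
  shows "k \<noteq> u" "u \<noteq> w" "k \<noteq> w"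
  using assms(1)[of k k] assms(1)[of u u] assms(1)[of w w] assms(2)
  by (auto simp: oriented_triangle_def)

lemma oriented_triangle_vertices:
  assumes "card M = 3" "\<And>i k. C i k = - C k i" "oriented_triangle M C k u w"
  shows "M = {k, u, w}"
  using card3_eq_triple[OF assms(1)] oriented_triangle_distinct[OF assms(2,3)] assms(3)
  by (simp add: oriented_triangle_def)

lemma oriented_triangle_cases:
  assumes "card M = 3" "\<And>i k. C i k = - C k i" "oriented_triangle M C k u w" "v \<in> M"
  shows "v = k \<or> v = u \<or> v = w"
  using oriented_triangle_vertices[OF assms(1-3)] assms(4) by blast

lemma cyclic_triangle_at:
  assumes "card M = 3" "\<And>i k. C i k = - C k i" "cyclic M C" "k \<in> M"
  obtains u w where "oriented_triangle M C k u w"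
proof -
  obtain a b c where t: "oriented_triangle M C a b c"
    using assms(3) unfolding cyclic_def by blast
  then have "oriented_triangle M C b c a" "oriented_triangle M C c a b"
    by (auto simp: oriented_triangle_def)
  moreover have "k = a \<or> k = b \<or> k = c"
    using oriented_triangle_cases[OF assms(1,2) t assms(4)] .
  ultimately show ?thesis using t that by blast
qed

lemma oriented_triangle_head_unique:
  assumes "card M = 3" "\<And>i k. C i k = - C k i" "oriented_triangle M C k u w"
    and "v \<in> M" "0 < C k v"
  shows "v = u"
  using oriented_triangle_vertices[OF assms(1-3)] assms(3-5) assms(2)[of k k] assms(2)[of w k]
  by (auto simp: oriented_triangle_def)

lemma oriented_triangle_tail_unique:
  assumes "card M = 3" "\<And>i k. C i k = - C k i" "oriented_triangle M C k u w"
    and "v \<in> M" "0 < C v k"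
  shows "v = w"
  using oriented_triangle_vertices[OF assms(1-3)] assms(3-5) assms(2)[of k k] assms(2)[of k u]
  by (auto simp: oriented_triangle_def)

lemma opposite_heaviest_mut:
  assumes card: "card M = 3" and skew: "\<And>i k. C i k = - C k i"
    and abundant: "\<And>i k. i \<in> M \<Longrightarrow> k \<in> M \<Longrightarrow> i \<noteq> k \<Longrightarrow> 2 \<le> \<bar>C i k\<bar>"
    and "opposite_heaviest M C k" "j \<in> M" "j \<noteq> k"
  shows "opposite_heaviest M (mut j C) j"
proof -
  obtain u w where t: "oriented_triangle M C k u w" and heavy: "C k u \<le> C u w" "C w k \<le> C u w"
    using assms(4) unfolding opposite_heaviest_def by blast
  note d = oriented_triangle_distinct[OF skew t]
  have pos: "0 < C k u" "0 < C u w" "0 < C w k" and M: "k \<in> M" "u \<in> M" "w \<in> M"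
    using t by (auto simp: oriented_triangle_def)
  have "j = u \<or> j = w"
    using oriented_triangle_cases[OF card skew t assms(5)] assms(6) by blast
  then show ?thesis
  proof
    assume j: "j = u"
    have "2 \<le> C k u" using abundant[of k u] pos M d by simp
    then have "2 * C u w \<le> C k u * C u w" using pos by simp
    moreover have "mut u C k w = C k u * C u w - C w k"
      using mut_neq_out[OF skew, of k u w] skew[of k w] d pos by simp
    ultimately have "C k u \<le> mut u C k w" "C u w \<le> mut u C k w"
      using heavy by linarith+
    moreover have "mut u C u k = C k u" "mut u C w u = C u w"
      using skew[of u k] skew[of w u] by simp_all
    ultimately have "oriented_triangle M (mut u C) u k w \<and>
        mut u C u k \<le> mut u C k w \<and> mut u C w u \<le> mut u C k w"
      using pos M by (simp add: oriented_triangle_def)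
    then show ?thesis unfolding opposite_heaviest_def j by blast
  next
    assume j: "j = w"
    have "2 \<le> C w k" using abundant[of w k] pos M d by simp
    then have "2 * C u w \<le> C w k * C u w" using pos by simp
    moreover have "mut w C u k = C w k * C u w - C k u"
      using mut_neq_out[OF skew, of u w k] skew[of u k] d pos by simp
    ultimately have "C u w \<le> mut w C u k" "C w k \<le> mut w C u k"
      using heavy by linarith+
    moreover have "mut w C w u = C u w" "mut w C k w = C w k"
      using skew[of w u] skew[of k w] by simp_all
    ultimately have "oriented_triangle M (mut w C) w u k \<and>
        mut w C w u \<le> mut w C u k \<and> mut w C k w \<le> mut w C u k"
      using pos M by (simp add: oriented_triangle_def)
    then show ?thesis unfolding opposite_heaviest_def j by blast
  qed
qed

lemma not_cyclic_mut_path: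
  assumes skew: "\<And>i k. C i k = - C k i"
    and nonzero: "\<And>i k. i \<in> M \<Longrightarrow> k \<in> M \<Longrightarrow> i \<noteq> k \<Longrightarrow> C i k \<noteq> 0"
    and "\<not> cyclic M C" "p \<in> M" "j \<in> M" "q \<in> M" "0 < C p j" "0 < C j q"
  shows "opposite_heaviest M (mut j C) j"
proof -
  have d: "p \<noteq> j" "j \<noteq> q" "p \<noteq> q"
    using assms(7,8) skew[of j j] skew[of p j] by auto
  have pq: "0 < C p q"
  proof (rule ccontr)
    assume "\<not> 0 < C p q"
    then have "0 < C q p" using nonzero[of p q] skew[of p q] assms(4,6) d by simp
    then have "oriented_triangle M C j q p" using assms(4-8) by (simp add: oriented_triangle_def)
    then show False using assms(3) unfolding cyclic_def by blast
  qed
  have "C p j \<le> C j q * C p j" "C j q \<le> C j q * C p j"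
    using assms(7,8) by simp_all
  moreover have "mut j C p q = C p q + C j q * C p j"
    using mut_neq_out[OF skew, of p j q] d assms(7,8) by simp
  ultimately have "C p j \<le> mut j C p q" "C j q \<le> mut j C p q"
    using pq by linarith+
  moreover have "mut j C j p = C p j" "mut j C q j = C j q"
    using skew[of j p] skew[of q j] by simp_all
  ultimately have "oriented_triangle M (mut j C) j p q \<and>
      mut j C j p \<le> mut j C p q \<and> mut j C q j \<le> mut j C p q"
    using assms(4-8) by (simp add: oriented_triangle_def)
  then show ?thesis unfolding opposite_heaviest_def by blast
qed

section \<open>Mutation runs of rank 3\<close>

definition signed_source :: "'v set \<Rightarrow> int \<Rightarrow> ('v \<Rightarrow> 'v \<Rightarrow> int) \<Rightarrow> 'v \<Rightarrow> bool" where
  "signed_source M s C j \<longleftrightarrow> j \<in> M \<and> (\<forall>v\<in>M. v \<noteq> j \<longrightarrow> 0 < s * C j v)"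

lemma sign_coherentI:
  assumes "\<And>v. v \<in> M \<Longrightarrow> (\<forall>f\<in>F. 0 \<le> C f v) \<or> (\<forall>f\<in>F. C f v \<le> 0)"
  shows "sign_coherent M F C"
  using assms unfolding sign_coherent_def red_def green_def by blast

locale rank3_abundant_run =
  fixes M F :: "'v set" and B :: "'v \<Rightarrow> 'v \<Rightarrow> int" and m :: "nat \<Rightarrow> 'v"
  assumes skew: "\<And>i k. B i k = - B k i"
    and card_M: "card M = 3"
    and frozen_disjoint: "M \<inter> F = {}"
    and finite_F: "finite F"
    and abundant: "mutation_abundant M (mutable_part M B)"
    and m_in_M: "\<And>n. m n \<in> M"
    and m_reduced: "\<And>n. m n \<noteq> m (Suc n)"
    and m_recurrent: "\<And>v. v \<in> M \<Longrightarrow> infinite {n. m n = v}"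
begin

text \<open>The quiver just after the mutation at m n, so that m n is its last mutated vertex.\<close>

definition Q :: "nat \<Rightarrow> 'v \<Rightarrow> 'v \<Rightarrow> int" where
  "Q n = mutseq m B (Suc n)"

lemma Q_Suc: "Q (Suc n) = mut (m (Suc n)) (Q n)"
  by (simp add: Q_def)

lemma Q_skew: "Q n i k = - Q n k i"
  unfolding Q_def by (rule skew_mutseq[OF skew])

lemma Q_abundant: "i \<in> M \<Longrightarrow> k \<in> M \<Longrightarrow> i \<noteq> k \<Longrightarrow> 2 \<le> \<bar>Q n i k\<bar>"
  unfolding Q_def by (rule mutation_abundant_mutseq[OF abundant m_in_M])

lemma Q_Suc_row_next: "Q (Suc n) (m (Suc n)) k = Q n k (m (Suc n))"
  using Q_skew[of n k] by (simp add: Q_Suc)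

lemma Q_Suc_col_next: "Q (Suc n) i (m (Suc n)) = Q n (m (Suc n)) i"
  using Q_skew[of n _ i] by (simp add: Q_Suc)

lemma opposite_heaviest_Suc:
  "opposite_heaviest M (Q n) (m n) \<Longrightarrow> opposite_heaviest M (Q (Suc n)) (m (Suc n))"
  unfolding Q_Suc
  by (rule opposite_heaviest_mut[OF card_M Q_skew Q_abundant _ m_in_M m_reduced[symmetric]])

lemma opposite_heaviest_Suc_path:
  assumes "\<not> cyclic M (Q n)" "p \<in> M" "q \<in> M"
    and "0 < Q n p (m (Suc n))" "0 < Q n (m (Suc n)) q"
  shows "opposite_heaviest M (Q (Suc n)) (m (Suc n))"
proof -
  have "Q n i k \<noteq> 0" if "i \<in> M" "k \<in> M" "i \<noteq> k" for i k
    using Q_abundant[OF that, of n] by auto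
  then show ?thesis
    unfolding Q_Suc by (rule not_cyclic_mut_path[OF Q_skew _ assms(1,2) m_in_M assms(3-5)])
qed

lemma cyclic_after_acyclic:
  assumes "\<not> cyclic M (Q n)" "cyclic M (Q (Suc n))"
  shows "opposite_heaviest M (Q (Suc n)) (m (Suc n))"
proof -
  obtain u w where "oriented_triangle M (Q (Suc n)) (m (Suc n)) u w"
    using cyclic_triangle_at[OF card_M Q_skew assms(2) m_in_M] by blast
  then show ?thesis
    using opposite_heaviest_Suc_path[OF assms(1), of u w] Q_Suc_row_next Q_Suc_col_next
    by (simp add: oriented_triangle_def)
qed

lemma cyclic_dichotomy:
  "(\<forall>\<^sub>F n in sequentially. cyclic M (Q n)) \<or> (\<forall>\<^sub>F n in sequentially. \<not> cyclic M (Q n))"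
proof (cases "\<exists>n. \<not> cyclic M (Q n) \<and> cyclic M (Q (Suc n))")
  case True
  then obtain n where "opposite_heaviest M (Q (Suc n)) (m (Suc n))"
    using cyclic_after_acyclic by blast
  then have "\<forall>\<^sub>F k in sequentially. opposite_heaviest M (Q k) (m k)"
    by (rule eventually_invariant) (rule opposite_heaviest_Suc)
  then have "\<forall>\<^sub>F k in sequentially. cyclic M (Q k)"
    by (rule eventually_mono) (rule opposite_heaviest_cyclic)
  then show ?thesis ..
next
  case no_switch: False
  show ?thesis
  proof (cases "\<forall>n. cyclic M (Q n)")
    case True
    then show ?thesis by (simp add: always_eventually)
  next
    case False
    then obtain n where "\<not> cyclic M (Q n)" by blast
    then have "\<forall>\<^sub>F k in sequentially. \<not> cyclic M (Q k)"
      by (rule eventually_invariant) (use no_switch in blast)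
    then show ?thesis ..
  qed
qed

lemma source_or_sink:
  assumes "\<not> cyclic M (Q n)" "\<not> cyclic M (Q (Suc n))"
  obtains s where "s = 1 \<or> s = -1" "signed_source M s (Q n) (m (Suc n))"
proof (rule ccontr)
  let ?j = "m (Suc n)"
  assume "\<not> thesis"
  then have "\<not> signed_source M 1 (Q n) ?j" "\<not> signed_source M (-1) (Q n) ?j"
    using that by blast+
  then obtain p q where "p \<in> M" "p \<noteq> ?j" "Q n ?j p \<le> 0" "q \<in> M" "q \<noteq> ?j" "0 \<le> Q n ?j q"
    using m_in_M unfolding signed_source_def by (auto simp: not_less)
  then have "0 < Q n p ?j" "0 < Q n ?j q"
    using Q_abundant[of p ?j n] Q_abundant[of ?j q n] Q_skew[of n p ?j] m_in_M by auto
  then have "opposite_heaviest M (Q (Suc n)) ?j"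
    by (rule opposite_heaviest_Suc_path[OF assms(1) \<open>p \<in> M\<close> \<open>q \<in> M\<close>])
  then show False
    using assms(2) by (blast dest: opposite_heaviest_cyclic)
qed

lemma signed_source_Suc:
  assumes "s = 1 \<or> s = -1" "signed_source M s (Q n) (m (Suc n))"
    and "\<not> cyclic M (Q (Suc n))" "\<not> cyclic M (Q (Suc (Suc n)))"
  shows "signed_source M s (Q (Suc n)) (m (Suc (Suc n)))"
proof -
  obtain s' where s': "s' = 1 \<or> s' = -1" "signed_source M s' (Q (Suc n)) (m (Suc (Suc n)))"
    using source_or_sink[OF assms(3,4)] by blast
  have "0 < s * Q n (m (Suc n)) (m (Suc (Suc n)))"
    using assms(2) m_in_M m_reduced[of "Suc n"] unfolding signed_source_def by simp
  moreover have "0 < s' * Q (Suc n) (m (Suc (Suc n))) (m (Suc n))"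
    using s'(2) m_in_M m_reduced[of "Suc n"] unfolding signed_source_def by simp
  ultimately have "s' = s"
    using assms(1) s'(1) Q_Suc_col_next[of n "m (Suc (Suc n))"] by auto
  then show ?thesis using s'(2) by simp
qed

lemma eventually_signed_source:
  assumes "\<forall>\<^sub>F n in sequentially. \<not> cyclic M (Q n)"
  obtains s T where "s = 1 \<or> s = -1" "\<And>n. T \<le> n \<Longrightarrow> signed_source M s (Q n) (m (Suc n))"
proof -
  obtain T where acyclic: "\<And>n. T \<le> n \<Longrightarrow> \<not> cyclic M (Q n)"
    using assms unfolding eventually_sequentially by blast
  obtain s where s: "s = 1 \<or> s = -1" "signed_source M s (Q T) (m (Suc T))"
    using source_or_sink[OF acyclic acyclic] by auto
  have "signed_source M s (Q n) (m (Suc n))" if "T \<le> n" for n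
    using that
  proof (induction rule: dec_induct)
    case (step n)
    then show ?case using signed_source_Suc[OF s(1)] acyclic by simp
  qed (rule s(2))
  then show ?thesis using that s(1) by blast
qed

end

section \<open>The cyclic regime\<close>

locale cyclic_tail = rank3_abundant_run M F B m
  for M F :: "'v set" and B :: "'v \<Rightarrow> 'v \<Rightarrow> int" and m :: "nat \<Rightarrow> 'v" +
  fixes T :: nat
  assumes cyclic_tail: "\<And>n. T \<le> n \<Longrightarrow> cyclic M (Q n)"
begin

definition U :: "nat \<Rightarrow> 'v" where
  "U n = (SOME u. \<exists>w. oriented_triangle M (Q n) (m n) u w)"

definition W :: "nat \<Rightarrow> 'v" where
  "W n = (SOME w. oriented_triangle M (Q n) (m n) (U n) w)"

lemma triangle: "T \<le> n \<Longrightarrow> oriented_triangle M (Q n) (m n) (U n) (W n)"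
proof -
  assume "T \<le> n"
  then have "\<exists>u w. oriented_triangle M (Q n) (m n) u w"
    using cyclic_triangle_at[OF card_M Q_skew cyclic_tail m_in_M] by metis
  then have "\<exists>w. oriented_triangle M (Q n) (m n) (U n) w"
    unfolding U_def by (rule someI_ex)
  then show ?thesis
    unfolding W_def by (rule someI_ex)
qed

lemma triangle_cases: "T \<le> n \<Longrightarrow> v \<in> M \<Longrightarrow> v = m n \<or> v = U n \<or> v = W n"
  by (rule oriented_triangle_cases[OF card_M Q_skew triangle])

lemma next_in_triangle: "T \<le> n \<Longrightarrow> m (Suc n) = U n \<or> m (Suc n) = W n"
  using triangle_cases[OF _ m_in_M, of n "Suc n"] m_reduced[of n] by auto

lemma triangle_Suc_U:
  assumes "T \<le> n" "m (Suc n) = U n"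
  shows "U (Suc n) = m n" "W (Suc n) = W n"
proof -
  have t: "oriented_triangle M (Q (Suc n)) (U n) (U (Suc n)) (W (Suc n))"
    using triangle[of "Suc n"] assms by simp
  have "0 < Q n (m n) (U n)" "0 < Q n (U n) (W n)" "m n \<in> M" "W n \<in> M"
    using triangle[OF assms(1)] by (simp_all add: oriented_triangle_def)
  then have "0 < Q (Suc n) (U n) (m n)" "0 < Q (Suc n) (W n) (U n)"
    using Q_Suc_row_next[of n "m n"] Q_Suc_col_next[of n "W n"] assms(2) by simp_all
  then show "U (Suc n) = m n" "W (Suc n) = W n"
    using oriented_triangle_head_unique[OF card_M Q_skew t \<open>m n \<in> M\<close>]
      oriented_triangle_tail_unique[OF card_M Q_skew t \<open>W n \<in> M\<close>] by simp_all
qed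

lemma triangle_Suc_W:
  assumes "T \<le> n" "m (Suc n) = W n"
  shows "U (Suc n) = U n" "W (Suc n) = m n"
proof -
  have t: "oriented_triangle M (Q (Suc n)) (W n) (U (Suc n)) (W (Suc n))"
    using triangle[of "Suc n"] assms by simp
  have "0 < Q n (U n) (W n)" "0 < Q n (W n) (m n)" "U n \<in> M" "m n \<in> M"
    using triangle[OF assms(1)] by (simp_all add: oriented_triangle_def)
  then have "0 < Q (Suc n) (W n) (U n)" "0 < Q (Suc n) (m n) (W n)"
    using Q_Suc_row_next[of n "U n"] Q_Suc_col_next[of n "m n"] assms(2) by simp_all
  then show "U (Suc n) = U n" "W (Suc n) = m n"
    using oriented_triangle_head_unique[OF card_M Q_skew t \<open>U n \<in> M\<close>]
      oriented_triangle_tail_unique[OF card_M Q_skew t \<open>m n \<in> M\<close>] by simp_all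
qed

lemma U_stable: "T \<le> n \<Longrightarrow> m (Suc n) \<noteq> U n \<Longrightarrow> U (Suc n) = U n"
  using next_in_triangle triangle_Suc_W by blast

lemma W_stable: "T \<le> n \<Longrightarrow> m (Suc n) \<noteq> W n \<Longrightarrow> W (Suc n) = W n"
  using next_in_triangle triangle_Suc_U by blast

text \<open>This is where weak balancedness is used: no vertex of the triangle is avoided forever.\<close>

lemma eventually_mutated:
  assumes V: "V = U \<or> V = W" and "T \<le> n0" "P n0"
    and step: "\<And>n. T \<le> n \<Longrightarrow> P n \<Longrightarrow> m (Suc n) \<noteq> V n \<Longrightarrow> P (Suc n)"
  shows "\<exists>n\<ge>n0. P n \<and> m (Suc n) = V n"
proof (rule ccontr)
  assume avoided: "\<not> ?thesis"
  have stable: "P n \<and> V n = V n0" if "n0 \<le> n" for n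
    using that
  proof (induction rule: dec_induct)
    case (step n)
    then have "T \<le> n" "m (Suc n) \<noteq> V n"
      using \<open>T \<le> n0\<close> avoided by auto
    moreover have "V (Suc n) = V n"
      using V U_stable[of n] W_stable[of n] calculation by auto
    ultimately show ?case
      using assms(4) step.IH by simp
  qed (simp add: assms(3))
  have "i \<le> n0" if "m i = V n0" for i
  proof (rule ccontr)
    assume "\<not> i \<le> n0"
    then obtain n where "i = Suc n" "n0 \<le> n"
      by (cases i) auto
    moreover have "P n" "V n = V n0"
      using stable[OF \<open>n0 \<le> n\<close>] by auto
    ultimately show False
      using avoided that by auto
  qed
  then have "{i. m i = V n0} \<subseteq> {..n0}"
    by auto
  then have "finite {i. m i = V n0}"
    by (rule finite_subset) simp
  moreover have "V n0 \<in> M"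
    using V triangle[OF \<open>T \<le> n0\<close>] by (auto simp: oriented_triangle_def)
  ultimately show False
    using m_recurrent by blast
qed

abbreviation arrows_U :: "'v \<Rightarrow> nat \<Rightarrow> int" where "arrows_U f n \<equiv> Q n f (U n)"
abbreviation arrows_W :: "'v \<Rightarrow> nat \<Rightarrow> int" where "arrows_W f n \<equiv> Q n f (W n)"
abbreviation arrows_m :: "'v \<Rightarrow> nat \<Rightarrow> int" where "arrows_m f n \<equiv> Q n f (m n)"
abbreviation weight_mU :: "nat \<Rightarrow> int" where "weight_mU n \<equiv> Q n (m n) (U n)"
abbreviation weight_UW :: "nat \<Rightarrow> int" where "weight_UW n \<equiv> Q n (U n) (W n)"
abbreviation weight_Wm :: "nat \<Rightarrow> int" where "weight_Wm n \<equiv> Q n (W n) (m n)"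

lemma weights_ge_2:
  assumes "T \<le> n"
  shows "2 \<le> weight_mU n" "2 \<le> weight_UW n" "2 \<le> weight_Wm n"
  using triangle[OF assms] oriented_triangle_distinct[OF Q_skew triangle[OF assms]]
    Q_abundant[of "m n" "U n" n] Q_abundant[of "U n" "W n" n] Q_abundant[of "W n" "m n" n]
  by (auto simp: oriented_triangle_def)

lemma frozen_step_U:
  assumes "T \<le> n" "m (Suc n) = U n" "f \<notin> M"
  shows "arrows_U f (Suc n) = arrows_m f n - weight_mU n * max (- arrows_U f n) 0"
    and "arrows_W f (Suc n) = arrows_W f n + weight_UW n * max (arrows_U f n) 0"
    and "arrows_m f (Suc n) = - arrows_U f n"
    and "weight_mU (Suc n) = weight_mU n"
    and "weight_Wm (Suc n) = weight_UW n"
proof -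
  note t = triangle[OF assms(1)]
  note d = oriented_triangle_distinct[OF Q_skew t]
  have pos: "0 < weight_mU n" "0 < weight_UW n" and M: "m n \<in> M" "U n \<in> M" "W n \<in> M"
    using t by (auto simp: oriented_triangle_def)
  have f: "f \<noteq> m n" "f \<noteq> U n" "f \<noteq> W n" using assms(3) M by auto
  note tr = triangle_Suc_U[OF assms(1,2)]
  show "arrows_U f (Suc n) = arrows_m f n - weight_mU n * max (- arrows_U f n) 0"
    using mut_neq_in[OF Q_skew, of f "U n" "m n" n] Q_skew[of n "U n" f] d f pos
    by (simp add: tr Q_Suc assms(2))
  show "arrows_W f (Suc n) = arrows_W f n + weight_UW n * max (arrows_U f n) 0"
    using mut_neq_out[OF Q_skew, of f "U n" "W n" n] d f pos
    by (simp add: tr Q_Suc assms(2))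
  show "arrows_m f (Suc n) = - arrows_U f n"
    by (simp add: Q_Suc assms(2))
  show "weight_mU (Suc n) = weight_mU n"
    using Q_Suc_row_next[of n "m n"] by (simp add: tr assms(2))
  show "weight_Wm (Suc n) = weight_UW n"
    using Q_Suc_col_next[of n "W n"] by (simp add: tr assms(2))
qed

lemma frozen_step_W:
  assumes "T \<le> n" "m (Suc n) = W n" "f \<notin> M"
  shows "arrows_U f (Suc n) = arrows_U f n - weight_UW n * max (- arrows_W f n) 0"
    and "arrows_W f (Suc n) = arrows_m f n + weight_Wm n * max (arrows_W f n) 0"
    and "arrows_m f (Suc n) = - arrows_W f n"
    and "weight_mU (Suc n) = weight_UW n"
    and "weight_Wm (Suc n) = weight_Wm n"
proof -
  note t = triangle[OF assms(1)]
  note d = oriented_triangle_distinct[OF Q_skew t]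
  have pos: "0 < weight_UW n" "0 < weight_Wm n" and M: "m n \<in> M" "U n \<in> M" "W n \<in> M"
    using t by (auto simp: oriented_triangle_def)
  have f: "f \<noteq> m n" "f \<noteq> U n" "f \<noteq> W n" using assms(3) M by auto
  note tr = triangle_Suc_W[OF assms(1,2)]
  show "arrows_U f (Suc n) = arrows_U f n - weight_UW n * max (- arrows_W f n) 0"
    using mut_neq_in[OF Q_skew, of f "W n" "U n" n] Q_skew[of n "W n" f] d f pos
    by (simp add: tr Q_Suc assms(2))
  show "arrows_W f (Suc n) = arrows_m f n + weight_Wm n * max (arrows_W f n) 0"
    using mut_neq_out[OF Q_skew, of f "W n" "m n" n] d f pos
    by (simp add: tr Q_Suc assms(2))
  show "arrows_m f (Suc n) = - arrows_W f n"
    by (simp add: Q_Suc assms(2))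
  show "weight_mU (Suc n) = weight_UW n"
    using Q_Suc_row_next[of n "U n"] by (simp add: tr assms(2))
  show "weight_Wm (Suc n) = weight_Wm n"
    using Q_Suc_col_next[of n "m n"] by (simp add: tr assms(2))
qed

abbreviation coherent_at :: "'v \<Rightarrow> nat \<Rightarrow> bool" where
  "coherent_at f n \<equiv> cyc_coherent (arrows_U f n) (arrows_W f n) (arrows_m f n)"
abbreviation cone_U_at :: "'v \<Rightarrow> nat \<Rightarrow> bool" where
  "cone_U_at f n \<equiv> cyc_cone_u (weight_mU n) (arrows_U f n) (arrows_m f n)"
abbreviation cone_W_at :: "'v \<Rightarrow> nat \<Rightarrow> bool" where
  "cone_W_at f n \<equiv> cyc_cone_w (weight_Wm n) (arrows_W f n) (arrows_m f n)"

lemma U_side_step: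
  assumes "T \<le> n" "f \<notin> M" "coherent_at f n \<or> cone_U_at f n"
  shows "m (Suc n) = W n \<Longrightarrow> coherent_at f (Suc n)"
    and "m (Suc n) \<noteq> W n \<Longrightarrow> coherent_at f (Suc n) \<or> cone_U_at f (Suc n)"
proof -
  note w = weights_ge_2[OF assms(1)]
  show "coherent_at f (Suc n)" if "m (Suc n) = W n"
    unfolding frozen_step_W[OF assms(1) that assms(2)]
    by (rule cyc_coherent_step_w[OF w(2,3) assms(3)])
  show "coherent_at f (Suc n) \<or> cone_U_at f (Suc n)" if "m (Suc n) \<noteq> W n"
  proof -
    have U: "m (Suc n) = U n" using next_in_triangle[OF assms(1)] that by blast
    show ?thesis
      unfolding frozen_step_U[OF assms(1) U assms(2)]
      using assms(3) cyc_coherent_step_u[OF w(2,1)] cyc_cone_u_step_u[OF w(1)] by blast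
  qed
qed

lemma W_side_step:
  assumes "T \<le> n" "f \<notin> M" "coherent_at f n \<or> cone_W_at f n"
  shows "m (Suc n) = U n \<Longrightarrow> coherent_at f (Suc n)"
    and "m (Suc n) \<noteq> U n \<Longrightarrow> coherent_at f (Suc n) \<or> cone_W_at f (Suc n)"
proof -
  note w = weights_ge_2[OF assms(1)]
  show "coherent_at f (Suc n)" if "m (Suc n) = U n"
    unfolding frozen_step_U[OF assms(1) that assms(2)]
    by (rule cyc_coherent_step_u[OF w(2,1) assms(3)])
  show "coherent_at f (Suc n) \<or> cone_W_at f (Suc n)" if "m (Suc n) \<noteq> U n"
  proof -
    have W: "m (Suc n) = W n" using next_in_triangle[OF assms(1)] that by blast
    show ?thesis
      unfolding frozen_step_W[OF assms(1) W assms(2)]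
      using assms(3) cyc_coherent_step_w[OF w(2,3)] cyc_cone_w_step_w[OF w(3)] by blast
  qed
qed

lemma coherent_Suc: "T \<le> n \<Longrightarrow> f \<notin> M \<Longrightarrow> coherent_at f n \<Longrightarrow> coherent_at f (Suc n)"
  using U_side_step(1)[of n f] W_side_step(1)[of n f] next_in_triangle[of n] by blast

lemma settled_or_descent:
  assumes "T \<le> n" "f \<notin> M"
  shows "cyc_settled (weight_Wm (Suc n)) (weight_mU (Suc n))
      (arrows_U f (Suc n)) (arrows_W f (Suc n)) (arrows_m f (Suc n)) \<or>
    cyc_potential (arrows_U f (Suc n)) (arrows_W f (Suc n)) (arrows_m f (Suc n)) <
    cyc_potential (arrows_U f n) (arrows_W f n) (arrows_m f n)"
  using next_in_triangle[OF assms(1)]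
proof
  assume U: "m (Suc n) = U n"
  show ?thesis
    unfolding frozen_step_U[OF assms(1) U assms(2)]
    by (rule cyc_settled_step_u[OF weights_ge_2(2,1)[OF assms(1)]])
next
  assume W: "m (Suc n) = W n"
  show ?thesis
    unfolding frozen_step_W[OF assms(1) W assms(2)]
    by (rule cyc_settled_step_w[OF weights_ge_2(2,3)[OF assms(1)]])
qed

lemma eventually_coherent:
  assumes "f \<notin> M"
  obtains n where "T \<le> n" "coherent_at f n"
proof -
  have "\<exists>n\<ge>T. cyc_settled (weight_Wm n) (weight_mU n) (arrows_U f n) (arrows_W f n) (arrows_m f n)"
    by (rule potential_descent[where
          g = "\<lambda>n. cyc_potential (arrows_U f n) (arrows_W f n) (arrows_m f n)"])
      (use settled_or_descent[OF _ assms] in blast, simp add: cyc_potential_def)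
  then obtain n0 where "T \<le> n0"
    "cyc_settled (weight_Wm n0) (weight_mU n0) (arrows_U f n0) (arrows_W f n0) (arrows_m f n0)"
    by blast
  then consider "coherent_at f n0 \<or> cone_U_at f n0" | "coherent_at f n0 \<or> cone_W_at f n0"
    unfolding cyc_settled_def by blast
  then show ?thesis
  proof cases
    case 1
    from eventually_mutated[of W n0 "\<lambda>n. coherent_at f n \<or> cone_U_at f n", OF _ \<open>T \<le> n0\<close> 1]
    obtain n where "n0 \<le> n" "coherent_at f n \<or> cone_U_at f n" "m (Suc n) = W n"
      using U_side_step(2)[OF _ assms] by blast
    then show ?thesis
      using that[of "Suc n"] U_side_step(1)[OF _ assms] \<open>T \<le> n0\<close> by simp
  next
    case 2
    from eventually_mutated[of U n0 "\<lambda>n. coherent_at f n \<or> cone_W_at f n", OF _ \<open>T \<le> n0\<close> 2]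
    obtain n where "n0 \<le> n" "coherent_at f n \<or> cone_W_at f n" "m (Suc n) = U n"
      using W_side_step(2)[OF _ assms] by blast
    then show ?thesis
      using that[of "Suc n"] W_side_step(1)[OF _ assms] \<open>T \<le> n0\<close> by simp
  qed
qed

lemma eventually_all_coherent: "\<forall>\<^sub>F n in sequentially. T \<le> n \<and> (\<forall>f\<in>F. coherent_at f n)"
proof -
  have "\<forall>\<^sub>F n in sequentially. coherent_at f n" if "f \<in> F" for f
  proof -
    have "f \<notin> M" using that frozen_disjoint by blast
    then obtain n0 where "T \<le> n0" "coherent_at f n0"
      by (rule eventually_coherent)
    then show ?thesis
      by (intro eventually_invariant[of _ n0]) (auto intro: coherent_Suc[OF _ \<open>f \<notin> M\<close>])
  qed
  then have "\<forall>\<^sub>F n in sequentially. \<forall>f\<in>F. coherent_at f n"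
    by (intro eventually_ball_finite[OF finite_F]) blast
  moreover have "\<forall>\<^sub>F n in sequentially. T \<le> n"
    by (rule eventually_ge_at_top)
  ultimately show ?thesis
    by eventually_elim blast
qed

lemma sign_coherent_Suc:
  assumes "T \<le> n" "\<forall>f\<in>F. coherent_at f n"
  shows "sign_coherent M F (Q (Suc n))"
proof (rule sign_coherentI)
  fix v assume "v \<in> M"
  have frozen: "f \<notin> M" if "f \<in> F" for f using that frozen_disjoint by blast
  have coherent: "coherent_at f (Suc n)" if "f \<in> F" for f
    using coherent_Suc[OF assms(1) frozen] assms(2) that by blast
  have "T \<le> Suc n" using assms(1) by simp
  from triangle_cases[OF this \<open>v \<in> M\<close>] next_in_triangle[OF assms(1)]
  consider "v = U (Suc n)" | "v = W (Suc n)" | "v = m (Suc n)" "m (Suc n) = U n"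
    | "v = m (Suc n)" "m (Suc n) = W n"
    by blast
  then show "(\<forall>f\<in>F. 0 \<le> Q (Suc n) f v) \<or> (\<forall>f\<in>F. Q (Suc n) f v \<le> 0)"
  proof cases
    case 1
    then show ?thesis using coherent by (simp add: cyc_coherent_def)
  next
    case 2
    then show ?thesis using coherent by (simp add: cyc_coherent_def)
  next
    case 3
    then show ?thesis
      using frozen_step_U(3)[OF assms(1) 3(2) frozen] assms(2) by (simp add: cyc_coherent_def)
  next
    case 4
    then show ?thesis
      using frozen_step_W(3)[OF assms(1) 4(2) frozen] assms(2) by (simp add: cyc_coherent_def)
  qed
qed

lemma eventually_sign_coherent: "\<forall>\<^sub>F n in sequentially. sign_coherent M F (Q n)"
proof -
  have "\<forall>\<^sub>F n in sequentially. sign_coherent M F (Q (Suc n))"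
    using eventually_all_coherent by (rule eventually_mono) (blast intro: sign_coherent_Suc)
  then show ?thesis
    by (rule eventually_sequentially_Suc[of "\<lambda>n. sign_coherent M F (Q n)", THEN iffD1])
qed

end

section \<open>The acyclic regime\<close>

locale source_tail = rank3_abundant_run M F B m
  for M F :: "'v set" and B :: "'v \<Rightarrow> 'v \<Rightarrow> int" and m :: "nat \<Rightarrow> 'v" +
  fixes T :: nat and s :: int
  assumes sign: "s = 1 \<or> s = -1"
    and source: "\<And>n. T \<le> n \<Longrightarrow> signed_source M s (Q n) (m (Suc n))"
begin

lemma source_arrow: "T \<le> n \<Longrightarrow> v \<in> M \<Longrightarrow> v \<noteq> m (Suc n) \<Longrightarrow> 0 < s * Q n (m (Suc n)) v"
  using source unfolding signed_source_def by blast

lemma sink_arrow: "T \<le> n \<Longrightarrow> v \<in> M \<Longrightarrow> v \<noteq> m (Suc n) \<Longrightarrow> 0 < s * Q (Suc n) v (m (Suc n))"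
  using source_arrow by (simp add: Q_Suc_col_next)

lemma source_weight: "T \<le> n \<Longrightarrow> v \<in> M \<Longrightarrow> v \<noteq> m (Suc n) \<Longrightarrow> 2 \<le> s * Q n (m (Suc n)) v"
  using source_arrow[of n v] Q_abundant[of "m (Suc n)" v n] m_in_M sign by auto

text \<open>m n is a sink of Q n, and the mutation at the source m (Suc n) does not change the arrow
  between m n and the third vertex; so m n cannot be the next source.\<close>

lemma m_Suc_Suc_neq: "Suc T \<le> n \<Longrightarrow> m (Suc (Suc n)) \<noteq> m n"
proof
  let ?k = "m n" and ?j = "m (Suc n)"
  assume "Suc T \<le> n" and return: "m (Suc (Suc n)) = ?k"
  then obtain n0 where n: "n = Suc n0" "T \<le> n0" "T \<le> n"
    by (cases n) auto
  obtain e where e: "e \<in> M" "e \<noteq> ?k" "e \<noteq> ?j"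
    using card3_other_vertex[OF card_M, of ?k ?j] by blast
  have kj: "?k \<noteq> ?j" by (rule m_reduced)
  have "0 < s * Q n e ?k"
    using sink_arrow[OF n(2) e(1)] e(2) n(1) by simp
  moreover have "0 < s * Q n ?j e" "0 < s * Q n ?j ?k"
    using source_arrow[OF n(3)] e m_in_M kj by auto
  moreover have "0 < s * Q (Suc n) ?k e"
    using source_arrow[OF _ e(1), of "Suc n"] e(2) n(3) return by simp
  moreover have "s * Q (Suc n) ?k e = s * Q n ?k e + s * Q n ?j e * max (s * Q n ?k ?j) 0"
    unfolding Q_Suc by (rule mut_neq_signed[OF Q_skew[of n] kj e(3) sign]) fact
  ultimately show False
    using Q_skew[of n ?k e] Q_skew[of n ?k ?j] by (simp add: max_def)
qed

lemma window_cases: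
  assumes "Suc T \<le> n" "v \<in> M"
  shows "v = m n \<or> v = m (Suc n) \<or> v = m (Suc (Suc n))"
proof -
  have "M = {m n, m (Suc n), m (Suc (Suc n))}"
    using card3_eq_triple[OF card_M] m_in_M m_reduced m_Suc_Suc_neq[OF assms(1)] by simp
  then show ?thesis using assms(2) by blast
qed

lemma m_Suc3: "Suc T \<le> n \<Longrightarrow> m (Suc (Suc (Suc n))) = m n"
  using window_cases[OF _ m_in_M, of n "Suc (Suc (Suc n))"] m_reduced[of "Suc (Suc n)"]
    m_Suc_Suc_neq[of "Suc n"] by auto

abbreviation arrows_next :: "'v \<Rightarrow> nat \<Rightarrow> int" where "arrows_next f n \<equiv> s * Q n f (m (Suc n))"
abbreviation arrows_after :: "'v \<Rightarrow> nat \<Rightarrow> int" where "arrows_after f n \<equiv> s * Q n f (m (Suc (Suc n)))"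
abbreviation arrows_last :: "'v \<Rightarrow> nat \<Rightarrow> int" where "arrows_last f n \<equiv> s * Q n f (m n)"

lemma frozen_step:
  assumes "Suc T \<le> n" "f \<notin> M"
  shows "arrows_next f (Suc n) =
      arrows_after f n + s * Q n (m (Suc n)) (m (Suc (Suc n))) * max (arrows_next f n) 0"
    and "arrows_after f (Suc n) =
      arrows_last f n + s * Q n (m (Suc n)) (m n) * max (arrows_next f n) 0"
    and "arrows_last f (Suc n) = - arrows_next f n"
proof -
  have n: "T \<le> n" using assms(1) by simp
  have f: "f \<noteq> m (Suc n)" using assms(2) m_in_M by metis
  have k1: "m (Suc (Suc n)) \<noteq> m (Suc n)" and k2: "m n \<noteq> m (Suc n)"
    using m_reduced[of "Suc n"] m_reduced[of n] by simp_all
  show "arrows_next f (Suc n) =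
      arrows_after f n + s * Q n (m (Suc n)) (m (Suc (Suc n))) * max (arrows_next f n) 0"
    unfolding Q_Suc
    by (rule mut_neq_signed[OF Q_skew[of n] f k1 sign source_arrow[OF n m_in_M k1]])
  show "arrows_after f (Suc n) =
      arrows_last f n + s * Q n (m (Suc n)) (m n) * max (arrows_next f n) 0"
    unfolding Q_Suc m_Suc3[OF assms(1)]
    by (rule mut_neq_signed[OF Q_skew[of n] f k2 sign source_arrow[OF n m_in_M k2]])
  show "arrows_last f (Suc n) = - arrows_next f n"
    by (simp add: Q_Suc)
qed

abbreviation coherent_at :: "'v \<Rightarrow> nat \<Rightarrow> bool" where
  "coherent_at f n \<equiv> acyc_coherent (arrows_next f n) (arrows_after f n) (arrows_last f n)"

lemma weights_ge_2:
  assumes "Suc T \<le> n"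
  shows "2 \<le> s * Q n (m (Suc n)) (m (Suc (Suc n)))" "2 \<le> s * Q n (m (Suc n)) (m n)"
  using source_weight[OF _ m_in_M, of n] m_reduced[of n] m_reduced[of "Suc n"] assms by simp_all

lemma coherent_Suc:
  assumes "Suc T \<le> n" "f \<notin> M" "coherent_at f n"
  shows "coherent_at f (Suc n)"
  unfolding frozen_step[OF assms(1,2)]
  using acyc_coherent_step[OF _ _ assms(3)] weights_ge_2[OF assms(1)] by simp

lemma eventually_coherent:
  assumes "f \<notin> M"
  obtains n where "Suc T \<le> n" "coherent_at f n"
proof -
  have "\<exists>n\<ge>Suc T. coherent_at f n"
  proof (rule potential_descent[where
        g = "\<lambda>n. acyc_potential (arrows_next f n) (arrows_after f n) (arrows_last f n)"])
    fix n assume n: "Suc T \<le> n"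
    show "coherent_at f (Suc n) \<or>
      acyc_potential (arrows_next f (Suc n)) (arrows_after f (Suc n)) (arrows_last f (Suc n)) <
      acyc_potential (arrows_next f n) (arrows_after f n) (arrows_last f n)"
      unfolding frozen_step[OF n assms] by (intro acyc_potential_step weights_ge_2[OF n])
  qed (simp add: acyc_potential_def leading_zeros_def)
  then show ?thesis using that by blast
qed

lemma eventually_all_coherent: "\<forall>\<^sub>F n in sequentially. Suc T \<le> n \<and> (\<forall>f\<in>F. coherent_at f n)"
proof -
  have "\<forall>\<^sub>F n in sequentially. coherent_at f n" if "f \<in> F" for f
  proof -
    have "f \<notin> M" using that frozen_disjoint by blast
    then obtain n0 where "Suc T \<le> n0" "coherent_at f n0"
      by (rule eventually_coherent)
    then show ?thesis
      by (intro eventually_invariant[of _ n0]) (auto intro: coherent_Suc[OF _ \<open>f \<notin> M\<close>])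
  qed
  then have "\<forall>\<^sub>F n in sequentially. \<forall>f\<in>F. coherent_at f n"
    by (intro eventually_ball_finite[OF finite_F]) blast
  moreover have "\<forall>\<^sub>F n in sequentially. Suc T \<le> n"
    by (rule eventually_ge_at_top)
  ultimately show ?thesis
    by eventually_elim blast
qed

lemma sign_coherent_at:
  assumes "Suc T \<le> n" "\<forall>f\<in>F. coherent_at f n"
  shows "sign_coherent M F (Q n)"
proof (rule sign_coherentI)
  fix v assume "v \<in> M"
  then have "(\<forall>f\<in>F. 0 \<le> s * Q n f v) \<or> (\<forall>f\<in>F. s * Q n f v \<le> 0)"
    using window_cases[OF assms(1)] assms(2) by (auto simp: acyc_coherent_def)
  then show "(\<forall>f\<in>F. 0 \<le> Q n f v) \<or> (\<forall>f\<in>F. Q n f v \<le> 0)"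
    using sign by auto
qed

lemma eventually_sign_coherent: "\<forall>\<^sub>F n in sequentially. sign_coherent M F (Q n)"
  using eventually_all_coherent by (rule eventually_mono) (blast intro: sign_coherent_at)

end

context rank3_abundant_run
begin

lemma eventually_sign_coherent: "\<forall>\<^sub>F n in sequentially. sign_coherent M F (Q n)"
  using cyclic_dichotomy
proof
  assume "\<forall>\<^sub>F n in sequentially. cyclic M (Q n)"
  then obtain T where "\<And>n. T \<le> n \<Longrightarrow> cyclic M (Q n)"
    unfolding eventually_sequentially by blast
  then interpret cyclic: cyclic_tail M F B m T
    by unfold_locales
  show ?thesis by (rule cyclic.eventually_sign_coherent)
next
  assume "\<forall>\<^sub>F n in sequentially. \<not> cyclic M (Q n)"
  then obtain s T where "s = 1 \<or> s = -1" "\<And>n. T \<le> n \<Longrightarrow> signed_source M s (Q n) (m (Suc n))"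
    by (rule eventually_signed_source) blast
  then interpret acyclic: source_tail M F B m T s
    by unfold_locales
  show ?thesis by (rule acyclic.eventually_sign_coherent)
qed

end

theorem mainTheorem17:
  fixes M F :: "'v set" and B :: "'v \<Rightarrow> 'v \<Rightarrow> int" and m :: "nat \<Rightarrow> 'v"
  assumes "quiver M F B"
    and "card M = 3"
    and "F \<noteq> {}"
    and "connected_quiver M F B"
    and "mutation_abundant M (mutable_part M B)"
    and "\<forall>i. m i \<in> M"
    and "reduced_seq m"
    and "weakly_balanced M m"
  shows "\<exists>i. \<forall>j>i. sign_coherent M F (mutseq m B j)"
proof -
  interpret rank3_abundant_run M F B m
  proof
    show "B i k = - B k i" for i k
      using assms(1) unfolding quiver_def by blast
    show "M \<inter> F = {}" "finite F"
      using assms(1) unfolding quiver_def by blast+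
    show "m n \<noteq> m (Suc n)" for n
      using assms(7) unfolding reduced_seq_def by blast
    show "v \<in> M \<Longrightarrow> infinite {n. m n = v}" for v
      using assms(8) unfolding weakly_balanced_def by blast
  qed (use assms(2,5,6) in blast)+
  obtain N where N: "\<And>n. N \<le> n \<Longrightarrow> sign_coherent M F (Q n)"
    using eventually_sign_coherent unfolding eventually_sequentially by blast
  show ?thesis
  proof (intro exI allI impI)
    fix j assume "N < j"
    then obtain n where "j = Suc n" "N \<le> n"
      by (cases j) auto
    then show "sign_coherent M F (mutseq m B j)"
      using N unfolding Q_def by blast
  qed
qed

end
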